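(* Let $\mathcal M=(S,A,P)$ be an MDP, $T\subseteq S$ a set of sink target states, $\mathcal M'$ the pruned MDP and $s_0\in S'$. For every strategy $\sigma\in\Sigma_{\mathcal M,s_0}(\Diamond T)$, $$\mathbb E'_{\sigma,s_0}(\mathrm{len}_T)=\mathbb E_{\sigma,s_0}(\mathrm{len}_T\mid\Diamond T).$$
   Context: An MDP is $\mathcal M=(S,A,P)$ with $S,A$ finite and $P$ a partial map $S\times A\to\mathrm{Dist}(S)$; $a$ is legal at $s$ if $P(s,a)$ is defined; $P(s,a,s')=P(s,a)(s')$. A strategy maps finite paths to distributions over legal actions at the last state (history-dependent, randomized). $\Pr_{\sigma,s}$, $\mathbb E_{\sigma,s}$ are the induced probability measure and expectation on infinite paths from $s$. States of $T$ are sinks; $\Diamond T$ is the event of visiting $T$; $\mathrm{Val}(s)=\max_\sigma\Pr_{\sigma,s}(\Diamond T)$; $\Sigma_{\mathcal M,s}(\Diamond T)$ is the set of strategies with $\Pr_{\sigma,s}(\Diamond T)=\mathrm{Val}(s)$. For an infinite path $\rho$, $\mathrm{len}_T(\rho)$ is the least $i$ with $\rho[i]\in T$ (the $(i+1)$-th state). $\mathbb E_{\sigma,s}(\mathrm{len}_T\mid\Diamond T)=\sum_{r\ge0}r\cdot\Pr_{\sigma,s}(\Diamond T\wedge \mathrm{len}_T=r)/\Pr_{\sigma,s}(\Diamond T)$. $\mathrm{Opt}_{\mathcal M}=\{(s,a): a\text{ legal at }s,\ \mathrm{Val}(s)=\sum_{s'}P(s,a,s')\mathrm{Val}(s')\}$;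 $\Sigma^{\mathrm{Opt}}_{\mathcal M}$ is the set of strategies that, after every finite path $\rho$, only give positive probability to actions $a$ with $(\mathrm{last}(\rho),a)\in\mathrm{Opt}_{\mathcal M}$; every strategy in $\Sigma_{\mathcal M,s}(\Diamond T)$ lies in $\Sigma^{\mathrm{Opt}}_{\mathcal M}$. The pruned MDP $\mathcal M'=(S',A,P')$ has $S'=\{s:\mathrm{Val}(s)>0\}$ and $P'(s,a,s')=P(s,a,s')\mathrm{Val}(s')/\mathrm{Val}(s)$ if $s\in S'$ and $(s,a)\in\mathrm{Opt}_{\mathcal M}$ (undefined otherwise). Strategies in $\Sigma^{\mathrm{Opt}}_{\mathcal M}$ are identified with strategies of $\mathcal M'$ by restriction to finite paths of $\mathcal M'$; $\mathbb E'_{\sigma,s}$ is the expectation in $\mathcal M'$. *)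

theory Defs
  imports Complex_Main "HOL-Library.Extended_Nonnegative_Real"
begin

text \<open>An MDP (S,A,P) with S = UNIV :: 's set and A = UNIV :: 'a set (finite types).
  P s a = None means a is not legal at s; P s a = Some d gives the distribution d.\<close>

type_synonym ('s,'a) mdp = "'s \<Rightarrow> 'a \<Rightarrow> ('s \<Rightarrow> real) option"

definition is_mdp :: "('s::finite,'a::finite) mdp \<Rightarrow> bool" where
  "is_mdp P \<longleftrightarrow>
     (\<forall>s a d. P s a = Some d \<longrightarrow> (\<forall>t. 0 \<le> d t) \<and> sum d UNIV = 1) \<and>
     (\<forall>s. \<exists>a. P s a \<noteq> None)"

definition trans :: "('s,'a) mdp \<Rightarrow> 's \<Rightarrow> 'a \<Rightarrow> 's \<Rightarrow> real" where
  "trans P s a t = (case P s a of None \<Rightarrow> 0 | Some d \<Rightarrow> d t)"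

definition sinks :: "('s,'a) mdp \<Rightarrow> 's set \<Rightarrow> bool" where
  "sinks P T \<longleftrightarrow> (\<forall>t\<in>T. \<forall>a. P t a \<noteq> None \<longrightarrow> trans P t a t = 1)"

text \<open>History-dependent randomized strategies: a finite path (nonempty list of states)
  is mapped to a distribution over the actions legal at its last state.\<close>
definition strategies :: "('s::finite,'a::finite) mdp \<Rightarrow> ('s list \<Rightarrow> 'a \<Rightarrow> real) set" where
  "strategies P = {\<sigma>. \<forall>xs. xs \<noteq> [] \<longrightarrow>
       (\<forall>a. 0 \<le> \<sigma> xs a) \<and> sum (\<sigma> xs) UNIV = 1 \<and>
       (\<forall>a. 0 < \<sigma> xs a \<longrightarrow> P (last xs) a \<noteq> None)}"

text \<open>Probability of the cylinder set of infinite paths with prefix xs (starting at hd xs).\<close>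
definition path_prob :: "('s,'a::finite) mdp \<Rightarrow> ('s list \<Rightarrow> 'a \<Rightarrow> real) \<Rightarrow> 's list \<Rightarrow> real" where
  "path_prob P \<sigma> xs =
     (\<Prod>i<length xs - 1. \<Sum>a\<in>UNIV. \<sigma> (take (Suc i) xs) a * trans P (xs ! i) a (xs ! Suc i))"

text \<open>Pr_{\<sigma>,s}(\<Diamond>T \<and> len_T = r): union of cylinders of prefixes of length r+1 that
  start in s and visit T for the first time at index r.\<close>
definition hit_prob :: "('s::finite,'a::finite) mdp \<Rightarrow> 's set \<Rightarrow> ('s list \<Rightarrow> 'a \<Rightarrow> real) \<Rightarrow> 's \<Rightarrow> nat \<Rightarrow> real" where
  "hit_prob P T \<sigma> s r =
     (\<Sum>xs\<in>{xs. length xs = Suc r \<and> xs ! 0 = s \<and> xs ! r \<in> T \<and> (\<forall>i<r. xs ! i \<notin> T)}.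
        path_prob P \<sigma> xs)"

text \<open>Pr_{\<sigma>,s}(\<Diamond>T), by countable additivity over the disjoint events len_T = r.\<close>
definition reach_prob :: "('s::finite,'a::finite) mdp \<Rightarrow> 's set \<Rightarrow> ('s list \<Rightarrow> 'a \<Rightarrow> real) \<Rightarrow> 's \<Rightarrow> ennreal" where
  "reach_prob P T \<sigma> s = (\<Sum>r. ennreal (hit_prob P T \<sigma> s r))"

definition Val :: "('s::finite,'a::finite) mdp \<Rightarrow> 's set \<Rightarrow> 's \<Rightarrow> real" where
  "Val P T s = enn2real (SUP \<sigma>\<in>strategies P. reach_prob P T \<sigma> s)"

definition opt_strategies :: "('s::finite,'a::finite) mdp \<Rightarrow> 's set \<Rightarrow> 's \<Rightarrow> ('s list \<Rightarrow> 'a \<Rightarrow> real) set" where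
  "opt_strategies P T s = {\<sigma>\<in>strategies P. reach_prob P T \<sigma> s = ennreal (Val P T s)}"

definition Opt :: "('s::finite,'a::finite) mdp \<Rightarrow> 's set \<Rightarrow> ('s \<times> 'a) set" where
  "Opt P T = {(s,a). P s a \<noteq> None \<and> Val P T s = (\<Sum>t\<in>UNIV. trans P s a t * Val P T t)}"

text \<open>The pruned MDP M'. States outside S' = {s. Val s > 0} have no legal actions
  (and are never reached from S' since P'(s,a,s') = 0 when Val s' = 0).\<close>
definition pruned :: "('s::finite,'a::finite) mdp \<Rightarrow> 's set \<Rightarrow> ('s,'a) mdp" where
  "pruned P T s a =
     (if 0 < Val P T s \<and> (s,a) \<in> Opt P T
      then Some (\<lambda>t. trans P s a t * Val P T t / Val P T s) else None)"

text \<open>E_{\<sigma>,s}(len_T), where len_T = \<infinity> on paths not visiting T.\<close>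
definition exp_len :: "('s::finite,'a::finite) mdp \<Rightarrow> 's set \<Rightarrow> ('s list \<Rightarrow> 'a \<Rightarrow> real) \<Rightarrow> 's \<Rightarrow> ennreal" where
  "exp_len P T \<sigma> s =
     (\<Sum>r. of_nat r * ennreal (hit_prob P T \<sigma> s r)) + top * (1 - reach_prob P T \<sigma> s)"

definition cond_exp_len :: "('s::finite,'a::finite) mdp \<Rightarrow> 's set \<Rightarrow> ('s list \<Rightarrow> 'a \<Rightarrow> real) \<Rightarrow> 's \<Rightarrow> ennreal" where
  "cond_exp_len P T \<sigma> s =
     (\<Sum>r. of_nat r * ennreal (hit_prob P T \<sigma> s r)) / reach_prob P T \<sigma> s"

end

theory Submission
  imports Defs
begin

text \<open>Since Val is a supersolution of the Bellman equation, an optimal strategy can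
  lose nothing along the way: it only plays actions of Opt, and after every first step of positive
  probability it continues optimally from the successor. The first-step weight of the pruned MDP
  is therefore the original one rescaled by Val(t)/Val(s), and by induction on r these factors
  telescope: the probability in M' of hitting T first at time r equals Pr(len_T = r)/Val(s0).
  Summing over r, the strategy reaches T almost surely in M', so the infinite part of E' vanishes
  and E' is the conditional expectation.\<close>

abbreviation (input) shift_strategy :: "'s \<Rightarrow> ('s list \<Rightarrow> 'a \<Rightarrow> real) \<Rightarrow> 's list \<Rightarrow> 'a \<Rightarrow> real" where
  "shift_strategy s \<sigma> \<equiv> \<lambda>xs. \<sigma> (s # xs)"

lemma trans_nonneg: "is_mdp P \<Longrightarrow> 0 \<le> trans P s a t"
  unfolding is_mdp_def trans_def by (cases "P s a") auto

lemma sum_trans_eq_1: "is_mdp P \<Longrightarrow> P s a \<noteq> None \<Longrightarrow> (\<Sum>t\<in>UNIV. trans P s a t) = 1"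
  unfolding is_mdp_def trans_def by (cases "P s a") auto

lemma strategy_nonneg: "\<sigma> \<in> strategies P \<Longrightarrow> xs \<noteq> [] \<Longrightarrow> 0 \<le> \<sigma> xs a"
  unfolding strategies_def by auto

lemma strategy_sum_eq_1: "\<sigma> \<in> strategies P \<Longrightarrow> xs \<noteq> [] \<Longrightarrow> sum (\<sigma> xs) UNIV = 1"
  unfolding strategies_def by auto

lemma strategy_legal: "\<sigma> \<in> strategies P \<Longrightarrow> xs \<noteq> [] \<Longrightarrow> 0 < \<sigma> xs a \<Longrightarrow> P (last xs) a \<noteq> None"
  unfolding strategies_def by auto

lemma shift_strategy_in_strategies:
  fixes \<sigma> :: "'s::finite list \<Rightarrow> 'a::finite \<Rightarrow> real"
  assumes "\<sigma> \<in> strategies P"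
  shows "shift_strategy s \<sigma> \<in> strategies P"
  unfolding strategies_def
proof (intro CollectI allI impI)
  fix xs :: "'s list"
  assume "xs \<noteq> []"
  have "s # xs \<noteq> []" by simp
  then have "(\<forall>a. 0 \<le> \<sigma> (s # xs) a) \<and> sum (\<sigma> (s # xs)) UNIV = 1 \<and>
      (\<forall>a. 0 < \<sigma> (s # xs) a \<longrightarrow> P (last (s # xs)) a \<noteq> None)"
    using assms unfolding strategies_def by blast
  with \<open>xs \<noteq> []\<close> show "(\<forall>a. 0 \<le> \<sigma> (s # xs) a) \<and> sum (\<sigma> (s # xs)) UNIV = 1 \<and>
      (\<forall>a. 0 < \<sigma> (s # xs) a \<longrightarrow> P (last xs) a \<noteq> None)"
    by simp
qed

lemma ex_strategy:
  assumes "is_mdp P"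
  shows "\<exists>\<sigma>. \<sigma> \<in> strategies P"
proof
  define choice where "choice s = (SOME a. P s a \<noteq> None)" for s
  have legal: "P s (choice s) \<noteq> None" for s
  proof -
    have "\<exists>a. P s a \<noteq> None" using assms unfolding is_mdp_def by blast
    then show ?thesis unfolding choice_def by (rule someI_ex)
  qed
  show "(\<lambda>xs a. if a = choice (last xs) then 1 else 0) \<in> strategies P"
    unfolding strategies_def using legal by simp
qed

definition first_hits :: "'s set \<Rightarrow> 's \<Rightarrow> nat \<Rightarrow> 's list set" where
  "first_hits T s r = {xs. length xs = Suc r \<and> xs ! 0 = s \<and> xs ! r \<in> T \<and> (\<forall>i<r. xs ! i \<notin> T)}"

lemma first_hits_0: "first_hits T s 0 = (if s \<in> T then {[s]} else {})"
  by (auto simp: first_hits_def length_Suc_conv)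

lemma first_hits_Suc_target: "s \<in> T \<Longrightarrow> first_hits T s (Suc r) = {}"
  by (auto simp: first_hits_def)

lemma first_hits_Suc:
  assumes "s \<notin> T"
  shows "first_hits T s (Suc r) = (\<Union>t. (#) s ` first_hits T t r)"
proof (intro set_eqI iffI)
  fix xs assume "xs \<in> first_hits T s (Suc r)"
  then obtain ys where "xs = s # ys" "ys \<in> first_hits T (ys ! 0) r"
    by (cases xs) (auto simp: first_hits_def All_less_Suc2)
  then show "xs \<in> (\<Union>t. (#) s ` first_hits T t r)" by blast
next
  fix xs assume "xs \<in> (\<Union>t. (#) s ` first_hits T t r)"
  with assms show "xs \<in> first_hits T s (Suc r)"
    by (auto simp: first_hits_def All_less_Suc2)
qed

lemma finite_first_hits: "finite (first_hits T (s::'s::finite) r)"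
  by (rule finite_subset[OF _ finite_lists_length_eq[of UNIV "Suc r"]]) (auto simp: first_hits_def)

lemma hit_prob_eq_sum_first_hits: "hit_prob P T \<sigma> s r = (\<Sum>xs\<in>first_hits T s r. path_prob P \<sigma> xs)"
  by (simp add: hit_prob_def first_hits_def)

definition step_prob :: "('s,'a::finite) mdp \<Rightarrow> ('s list \<Rightarrow> 'a \<Rightarrow> real) \<Rightarrow> 's \<Rightarrow> 's \<Rightarrow> real" where
  "step_prob P \<sigma> s t = (\<Sum>a\<in>UNIV. \<sigma> [s] a * trans P s a t)"

lemma path_prob_Cons:
  assumes "ys \<noteq> []"
  shows "path_prob P \<sigma> (s # ys) = step_prob P \<sigma> s (hd ys) * path_prob P (shift_strategy s \<sigma>) ys"
proof -
  obtain m where m: "length ys = Suc m" using assms by (cases ys) auto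
  have "path_prob P \<sigma> (s # ys) =
      (\<Prod>i<Suc m. \<Sum>a\<in>UNIV. \<sigma> (take (Suc i) (s # ys)) a * trans P ((s # ys) ! i) a ((s # ys) ! Suc i))"
    unfolding path_prob_def using m by simp
  also have "\<dots> = step_prob P \<sigma> s (hd ys) *
      (\<Prod>i<m. \<Sum>a\<in>UNIV. \<sigma> (s # take (Suc i) ys) a * trans P (ys ! i) a (ys ! Suc i))"
    unfolding prod.lessThan_Suc_shift step_prob_def using assms by (simp add: hd_conv_nth)
  finally show ?thesis unfolding path_prob_def using m by simp
qed

lemma hit_prob_0: "hit_prob P T \<sigma> s 0 = (if s \<in> T then 1 else 0)"
  by (simp add: hit_prob_eq_sum_first_hits first_hits_0 path_prob_def)

lemma hit_prob_Suc_target: "s \<in> T \<Longrightarrow> hit_prob P T \<sigma> s (Suc r) = 0"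
  by (simp add: hit_prob_eq_sum_first_hits first_hits_Suc_target)

lemma hit_prob_Suc:
  fixes P :: "('s::finite,'a::finite) mdp"
  assumes "s \<notin> T"
  shows "hit_prob P T \<sigma> s (Suc r) = (\<Sum>t\<in>UNIV. step_prob P \<sigma> s t * hit_prob P T (shift_strategy s \<sigma>) t r)"
proof -
  have "hit_prob P T \<sigma> s (Suc r) = (\<Sum>t\<in>UNIV. \<Sum>xs\<in>(#) s ` first_hits T t r. path_prob P \<sigma> xs)"
    unfolding hit_prob_eq_sum_first_hits first_hits_Suc[OF assms]
    by (rule sum.UNION_disjoint) (auto simp: finite_first_hits, auto simp: first_hits_def)
  also have "\<dots> = (\<Sum>t\<in>UNIV. \<Sum>ys\<in>first_hits T t r. step_prob P \<sigma> s t * path_prob P (shift_strategy s \<sigma>) ys)"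
  proof (rule sum.cong[OF refl])
    fix t
    have "path_prob P \<sigma> (s # ys) = step_prob P \<sigma> s t * path_prob P (shift_strategy s \<sigma>) ys"
      if "ys \<in> first_hits T t r" for ys
      using that path_prob_Cons[of ys] by (cases ys) (auto simp: first_hits_def)
    then show "(\<Sum>xs\<in>(#) s ` first_hits T t r. path_prob P \<sigma> xs) =
        (\<Sum>ys\<in>first_hits T t r. step_prob P \<sigma> s t * path_prob P (shift_strategy s \<sigma>) ys)"
      by (simp add: sum.reindex)
  qed
  finally show ?thesis by (simp add: hit_prob_eq_sum_first_hits sum_distrib_left)
qed

lemma path_prob_nonneg:
  assumes "is_mdp P" "\<sigma> \<in> strategies P"
  shows "0 \<le> path_prob P \<sigma> xs"
  unfolding path_prob_def
  by (intro prod_nonneg sum_nonneg mult_nonneg_nonneg trans_nonneg[OF assms(1)] strategy_nonneg[OF assms(2)]) auto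

lemma hit_prob_nonneg: "is_mdp P \<Longrightarrow> \<sigma> \<in> strategies P \<Longrightarrow> 0 \<le> hit_prob P T \<sigma> s r"
  unfolding hit_prob_def by (intro sum_nonneg path_prob_nonneg)

lemma step_prob_nonneg:
  assumes "is_mdp P" "\<sigma> \<in> strategies P"
  shows "0 \<le> step_prob P \<sigma> s t"
  unfolding step_prob_def
  by (intro sum_nonneg mult_nonneg_nonneg trans_nonneg[OF assms(1)] strategy_nonneg[OF assms(2)]) simp

lemma sum_step_prob:
  assumes "is_mdp P" "\<sigma> \<in> strategies P"
  shows "(\<Sum>t\<in>UNIV. step_prob P \<sigma> s t) = 1"
proof -
  have "\<sigma> [s] a * (\<Sum>t\<in>UNIV. trans P s a t) = \<sigma> [s] a" for a
    using strategy_legal[OF assms(2), of "[s]" a] strategy_nonneg[OF assms(2), of "[s]" a]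
      sum_trans_eq_1[OF assms(1), of s a] by force
  then have "(\<Sum>t\<in>UNIV. step_prob P \<sigma> s t) = (\<Sum>a\<in>UNIV. \<sigma> [s] a)"
    unfolding step_prob_def sum_distrib_left by (subst sum.swap) simp
  also have "\<dots> = 1" using strategy_sum_eq_1[OF assms(2), of "[s]"] by simp
  finally show ?thesis .
qed

lemma partial_hit_prob_le_1:
  assumes "is_mdp P"
  shows "\<sigma> \<in> strategies P \<Longrightarrow> (\<Sum>r<n. hit_prob P T \<sigma> s r) \<le> 1"
proof (induction n arbitrary: \<sigma> s)
  case 0
  then show ?case by simp
next
  case (Suc n)
  have split: "(\<Sum>r<Suc n. hit_prob P T \<sigma> s r) = hit_prob P T \<sigma> s 0 + (\<Sum>r<n. hit_prob P T \<sigma> s (Suc r))"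
    by (rule sum.lessThan_Suc_shift)
  show ?case
  proof (cases "s \<in> T")
    case True
    then show ?thesis unfolding split by (simp add: hit_prob_0 hit_prob_Suc_target)
  next
    case False
    have "(\<Sum>r<n. hit_prob P T \<sigma> s (Suc r))
        = (\<Sum>t\<in>UNIV. step_prob P \<sigma> s t * (\<Sum>r<n. hit_prob P T (shift_strategy s \<sigma>) t r))"
      unfolding hit_prob_Suc[OF False] sum_distrib_left by (rule sum.swap)
    also have "\<dots> \<le> (\<Sum>t\<in>UNIV. step_prob P \<sigma> s t)"
      by (intro sum_mono mult_right_le_one_le step_prob_nonneg sum_nonneg hit_prob_nonneg Suc.IH
          shift_strategy_in_strategies assms Suc.prems)
    also have "\<dots> = 1" using sum_step_prob[OF assms Suc.prems] .
    finally show ?thesis unfolding split using False by (simp add: hit_prob_0)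
  qed
qed

definition reach_prob_real :: "('s::finite,'a::finite) mdp \<Rightarrow> 's set \<Rightarrow> ('s list \<Rightarrow> 'a \<Rightarrow> real) \<Rightarrow> 's \<Rightarrow> real" where
  "reach_prob_real P T \<sigma> s = (\<Sum>r. hit_prob P T \<sigma> s r)"

lemma summable_hit_prob: "is_mdp P \<Longrightarrow> \<sigma> \<in> strategies P \<Longrightarrow> summable (hit_prob P T \<sigma> s)"
  by (rule summableI_nonneg_bounded[where x=1]) (auto intro: hit_prob_nonneg partial_hit_prob_le_1)

lemma reach_prob_real_nonneg: "is_mdp P \<Longrightarrow> \<sigma> \<in> strategies P \<Longrightarrow> 0 \<le> reach_prob_real P T \<sigma> s"
  unfolding reach_prob_real_def by (intro suminf_nonneg summable_hit_prob hit_prob_nonneg)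

lemma reach_prob_real_le_1: "is_mdp P \<Longrightarrow> \<sigma> \<in> strategies P \<Longrightarrow> reach_prob_real P T \<sigma> s \<le> 1"
  unfolding reach_prob_real_def by (intro suminf_le_const summable_hit_prob partial_hit_prob_le_1)

lemma reach_prob_eq_ennreal:
  "is_mdp P \<Longrightarrow> \<sigma> \<in> strategies P \<Longrightarrow> reach_prob P T \<sigma> s = ennreal (reach_prob_real P T \<sigma> s)"
  unfolding reach_prob_def reach_prob_real_def
  by (rule suminf_ennreal2) (auto intro: hit_prob_nonneg summable_hit_prob)

lemma hit_prob_le_reach_prob_real:
  assumes "is_mdp P" "\<sigma> \<in> strategies P"
  shows "hit_prob P T \<sigma> s r \<le> reach_prob_real P T \<sigma> s"
  unfolding reach_prob_real_def
  using sum_le_suminf[OF summable_hit_prob[OF assms], of "{r}"] hit_prob_nonneg[OF assms] by auto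

lemma reach_prob_real_target:
  assumes "s \<in> T"
  shows "reach_prob_real P T \<sigma> s = 1"
proof -
  from assms have "hit_prob P T \<sigma> s = (\<lambda>r. if r = 0 then 1 else 0)"
    by (auto simp: fun_eq_iff hit_prob_0 hit_prob_Suc_target gr0_conv_Suc)
  then show ?thesis
    unfolding reach_prob_real_def using sums_unique[OF sums_single[of 0 "\<lambda>_. 1::real"]] by simp
qed

lemma hit_prob_eq_0_if_reach_prob_real_eq_0:
  assumes "is_mdp P" "\<sigma> \<in> strategies P" "reach_prob_real P T \<sigma> s = 0"
  shows "hit_prob P T \<sigma> s r = 0"
  using hit_prob_le_reach_prob_real[OF assms(1,2)] hit_prob_nonneg[OF assms(1,2)] assms(3)
  by (metis order_antisym)

lemma reach_prob_real_step:
  assumes "is_mdp P" "\<sigma> \<in> strategies P" "s \<notin> T"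
  shows "reach_prob_real P T \<sigma> s =
    (\<Sum>t\<in>UNIV. step_prob P \<sigma> s t * reach_prob_real P T (shift_strategy s \<sigma>) t)"
proof -
  have summable: "summable (hit_prob P T (shift_strategy s \<sigma>) t)" for t
    by (intro summable_hit_prob shift_strategy_in_strategies assms)
  have "reach_prob_real P T \<sigma> s = (\<Sum>r. hit_prob P T \<sigma> s (Suc r))"
    unfolding reach_prob_real_def using suminf_split_head[OF summable_hit_prob[OF assms(1,2)]] assms(3)
    by (simp add: hit_prob_0)
  also have "\<dots> = (\<Sum>t\<in>UNIV. \<Sum>r. step_prob P \<sigma> s t * hit_prob P T (shift_strategy s \<sigma>) t r)"
    unfolding hit_prob_Suc[OF assms(3)] by (intro suminf_sum summable_mult summable)
  also have "\<dots> = (\<Sum>t\<in>UNIV. step_prob P \<sigma> s t * reach_prob_real P T (shift_strategy s \<sigma>) t)"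
    unfolding reach_prob_real_def by (intro sum.cong refl suminf_mult summable)
  finally show ?thesis .
qed

lemma reach_prob_real_cong:
  assumes "\<And>ys. ys \<noteq> [] \<Longrightarrow> hd ys = t \<Longrightarrow> \<sigma> ys = \<tau> ys"
  shows "reach_prob_real P T \<sigma> t = reach_prob_real P T \<tau> t"
proof -
  have "path_prob P \<sigma> xs = path_prob P \<tau> xs" if "xs \<in> first_hits T t r" for xs r
    unfolding path_prob_def
  proof (intro prod.cong sum.cong refl)
    fix i a assume "i \<in> {..<length xs - 1}"
    with that have "take (Suc i) xs \<noteq> []" "hd (take (Suc i) xs) = t"
      by (cases xs, auto simp: first_hits_def)+
    then show "\<sigma> (take (Suc i) xs) a * trans P (xs ! i) a (xs ! Suc i) =
        \<tau> (take (Suc i) xs) a * trans P (xs ! i) a (xs ! Suc i)" using assms by simp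
  qed
  then show ?thesis
    unfolding reach_prob_real_def hit_prob_eq_sum_first_hits by (meson sum.cong)
qed

lemma Val_nonneg: "0 \<le> Val P T s"
  unfolding Val_def by simp

lemma ennreal_Val:
  assumes "is_mdp P"
  shows "ennreal (Val P T s) = (SUP \<sigma>\<in>strategies P. reach_prob P T \<sigma> s)"
proof -
  have "(SUP \<sigma>\<in>strategies P. reach_prob P T \<sigma> s) \<le> 1"
    using reach_prob_real_le_1[OF assms] reach_prob_eq_ennreal[OF assms] by (simp add: SUP_le_iff)
  then have "(SUP \<sigma>\<in>strategies P. reach_prob P T \<sigma> s) < top"
    using ennreal_one_less_top le_less_trans by blast
  then show ?thesis
    unfolding Val_def by simp
qed

lemma Val_le_1:
  assumes "is_mdp P"
  shows "Val P T s \<le> 1"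
proof -
  have "ennreal (Val P T s) \<le> 1"
    unfolding ennreal_Val[OF assms]
    using reach_prob_real_le_1[OF assms] reach_prob_eq_ennreal[OF assms] by (simp add: SUP_le_iff)
  then show ?thesis by simp
qed

lemma reach_prob_real_le_Val:
  assumes "is_mdp P" "\<sigma> \<in> strategies P"
  shows "reach_prob_real P T \<sigma> s \<le> Val P T s"
proof -
  have "ennreal (reach_prob_real P T \<sigma> s) \<le> ennreal (Val P T s)"
    unfolding ennreal_Val[OF assms(1)] reach_prob_eq_ennreal[OF assms, symmetric]
    using assms(2) by (rule SUP_upper)
  then show ?thesis using Val_nonneg ennreal_le_iff by blast
qed

lemma Val_target:
  assumes "is_mdp P" "s \<in> T"
  shows "Val P T s = 1"
proof -
  obtain \<sigma> where "\<sigma> \<in> strategies P" using ex_strategy[OF assms(1)] ..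
  then have "1 \<le> Val P T s"
    using reach_prob_real_le_Val[OF assms(1)] reach_prob_real_target[OF assms(2)] by metis
  then show ?thesis using Val_le_1[OF assms(1), of T s] by simp
qed

lemma Val_approx:
  assumes "is_mdp P" "0 < e"
  obtains \<sigma> where "\<sigma> \<in> strategies P" "Val P T s - e < reach_prob_real P T \<sigma> s"
proof (cases "Val P T s - e < 0")
  case True
  obtain \<sigma> where "\<sigma> \<in> strategies P" using ex_strategy[OF assms(1)] ..
  moreover have "Val P T s - e < reach_prob_real P T \<sigma> s"
    using True reach_prob_real_nonneg[OF assms(1) \<open>\<sigma> \<in> strategies P\<close>, of T s] by linarith
  ultimately show ?thesis by (rule that)
next
  case False
  then have "ennreal (Val P T s - e) < (SUP \<sigma>\<in>strategies P. reach_prob P T \<sigma> s)"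
    unfolding ennreal_Val[OF assms(1), symmetric] using assms(2) by (subst ennreal_less_iff) auto
  then obtain \<sigma> where "\<sigma> \<in> strategies P" "ennreal (Val P T s - e) < ennreal (reach_prob_real P T \<sigma> s)"
    by (auto simp: less_SUP_iff reach_prob_eq_ennreal[OF assms(1)])
  then show ?thesis using False that by (simp add: ennreal_less_iff)
qed

text \<open>Play a at the path [s], then follow the strategy indexed by the successor; the last branch
  only serves to make the strategy legal on paths that do not start at s.\<close>

definition prefix_action :: "'s \<Rightarrow> 'a \<Rightarrow> ('s \<Rightarrow> 's list \<Rightarrow> 'a \<Rightarrow> real) \<Rightarrow> 's list \<Rightarrow> 'a \<Rightarrow> real" where
  "prefix_action s a \<sigma>s xs =
     (if xs = [s] then (\<lambda>b. if b = a then 1 else 0)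
      else if tl xs \<noteq> [] then \<sigma>s (hd (tl xs)) (tl xs) else \<sigma>s (hd xs) xs)"

lemma prefix_action_in_strategies:
  fixes s :: "'s::finite" and a :: "'a::finite"
  assumes "P s a \<noteq> None" "\<And>t. \<sigma>s t \<in> strategies P"
  shows "prefix_action s a \<sigma>s \<in> strategies P"
  unfolding strategies_def
proof (intro CollectI allI impI)
  fix xs :: "'s list"
  assume "xs \<noteq> []"
  consider "xs = [s]" | "xs \<noteq> [s]" "tl xs \<noteq> []" | "xs \<noteq> [s]" "tl xs = []" by blast
  then show "(\<forall>b. 0 \<le> prefix_action s a \<sigma>s xs b) \<and> sum (prefix_action s a \<sigma>s xs) UNIV = 1 \<and>
      (\<forall>b. 0 < prefix_action s a \<sigma>s xs b \<longrightarrow> P (last xs) b \<noteq> None)"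
  proof cases
    case 1
    then show ?thesis using assms(1) by (simp add: prefix_action_def)
  next
    case 2
    have "(\<forall>b. 0 \<le> \<sigma>s (hd (tl xs)) (tl xs) b) \<and> sum (\<sigma>s (hd (tl xs)) (tl xs)) UNIV = 1 \<and>
        (\<forall>b. 0 < \<sigma>s (hd (tl xs)) (tl xs) b \<longrightarrow> P (last (tl xs)) b \<noteq> None)"
      using assms(2) 2(2) unfolding strategies_def by blast
    moreover have "last (tl xs) = last xs" using 2(2) by (cases xs) auto
    ultimately show ?thesis using 2 by (simp add: prefix_action_def)
  next
    case 3
    have "(\<forall>b. 0 \<le> \<sigma>s (hd xs) xs b) \<and> sum (\<sigma>s (hd xs) xs) UNIV = 1 \<and>
        (\<forall>b. 0 < \<sigma>s (hd xs) xs b \<longrightarrow> P (last xs) b \<noteq> None)"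
      using assms(2) \<open>xs \<noteq> []\<close> unfolding strategies_def by blast
    then show ?thesis using 3 by (simp add: prefix_action_def)
  qed
qed

lemma reach_prob_real_prefix_action:
  assumes "is_mdp P" "s \<notin> T" "P s a \<noteq> None" "\<And>t. \<sigma>s t \<in> strategies P"
  shows "reach_prob_real P T (prefix_action s a \<sigma>s) s =
    (\<Sum>t\<in>UNIV. trans P s a t * reach_prob_real P T (\<sigma>s t) t)"
proof -
  have "step_prob P (prefix_action s a \<sigma>s) s t = trans P s a t" for t
    unfolding step_prob_def prefix_action_def by (simp add: of_bool_def[symmetric])
  moreover have "reach_prob_real P T (shift_strategy s (prefix_action s a \<sigma>s)) t =
      reach_prob_real P T (\<sigma>s t) t" for t
    by (rule reach_prob_real_cong) (auto simp: prefix_action_def)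
  ultimately show ?thesis
    using reach_prob_real_step[OF assms(1) prefix_action_in_strategies[OF assms(3,4)] assms(2)] by simp
qed

lemma Val_ge_expected_Val:
  assumes "is_mdp P" "s \<notin> T" "P s a \<noteq> None"
  shows "(\<Sum>t\<in>UNIV. trans P s a t * Val P T t) \<le> Val P T s"
proof (rule field_le_epsilon)
  fix e :: real
  assume "0 < e"
  have "\<exists>\<sigma>. \<sigma> \<in> strategies P \<and> Val P T t - e < reach_prob_real P T \<sigma> t" for t
    using Val_approx[OF assms(1) \<open>0 < e\<close>] by metis
  then obtain \<sigma>s where \<sigma>s: "\<And>t. \<sigma>s t \<in> strategies P" "\<And>t. Val P T t - e < reach_prob_real P T (\<sigma>s t) t"
    by metis
  have "(\<Sum>t\<in>UNIV. trans P s a t * Val P T t) - e = (\<Sum>t\<in>UNIV. trans P s a t * (Val P T t - e))"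
    using sum_trans_eq_1[OF assms(1,3)]
    by (simp add: right_diff_distrib sum_subtractf sum_distrib_right[symmetric])
  also have "\<dots> \<le> (\<Sum>t\<in>UNIV. trans P s a t * reach_prob_real P T (\<sigma>s t) t)"
    by (intro sum_mono mult_left_mono trans_nonneg[OF assms(1)] less_imp_le \<sigma>s(2))
  also have "\<dots> = reach_prob_real P T (prefix_action s a \<sigma>s) s"
    using reach_prob_real_prefix_action[OF assms \<sigma>s(1)] by simp
  also have "\<dots> \<le> Val P T s"
    by (intro reach_prob_real_le_Val assms(1) prefix_action_in_strategies assms(3) \<sigma>s(1))
  finally show "(\<Sum>t\<in>UNIV. trans P s a t * Val P T t) \<le> Val P T s + e" by simp
qed

lemma sum_step_prob_mult:
  "(\<Sum>t\<in>UNIV. step_prob P \<sigma> s t * f t) = (\<Sum>a\<in>UNIV. \<sigma> [s] a * (\<Sum>t\<in>UNIV. trans P s a t * f t))"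
  unfolding step_prob_def sum_distrib_right sum_distrib_left mult.assoc by (rule sum.swap)

lemma strategy_weighted_expected_Val_le:
  assumes "is_mdp P" "\<sigma> \<in> strategies P" "s \<notin> T"
  shows "\<sigma> [s] a * (\<Sum>t\<in>UNIV. trans P s a t * Val P T t) \<le> \<sigma> [s] a * Val P T s"
proof (cases "0 < \<sigma> [s] a")
  case True
  then have "P s a \<noteq> None" using strategy_legal[OF assms(2), of "[s]" a] by simp
  then show ?thesis
    using Val_ge_expected_Val[OF assms(1,3)] True by (simp add: mult_left_mono)
next
  case False
  then show ?thesis using strategy_nonneg[OF assms(2), of "[s]" a] by simp
qed

lemma sum_eq_imp_eq_if_le:
  fixes f g :: "'i \<Rightarrow> 'a::ordered_cancel_comm_monoid_add"
  assumes "finite A" "\<And>x. x \<in> A \<Longrightarrow> f x \<le> g x" "sum f A = sum g A" "x \<in> A"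
  shows "f x = g x"
  using sum_strict_mono_ex1[of A f g] assms by (metis order.strict_iff_order)

lemma optimal_strategy_step_sums:
  assumes "is_mdp P" "\<sigma> \<in> strategies P" "reach_prob_real P T \<sigma> s = Val P T s" "s \<notin> T"
  shows "(\<Sum>t\<in>UNIV. step_prob P \<sigma> s t * reach_prob_real P T (shift_strategy s \<sigma>) t) =
      (\<Sum>t\<in>UNIV. step_prob P \<sigma> s t * Val P T t)"
    and "(\<Sum>a\<in>UNIV. \<sigma> [s] a * (\<Sum>t\<in>UNIV. trans P s a t * Val P T t)) =
      (\<Sum>a\<in>UNIV. \<sigma> [s] a * Val P T s)"
proof -
  have "Val P T s = (\<Sum>t\<in>UNIV. step_prob P \<sigma> s t * reach_prob_real P T (shift_strategy s \<sigma>) t)"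
    using reach_prob_real_step[OF assms(1,2,4)] assms(3) by simp
  moreover have "\<dots> \<le> (\<Sum>t\<in>UNIV. step_prob P \<sigma> s t * Val P T t)"
    by (intro sum_mono mult_left_mono reach_prob_real_le_Val step_prob_nonneg
        shift_strategy_in_strategies assms(1,2))
  moreover have "\<dots> = (\<Sum>a\<in>UNIV. \<sigma> [s] a * (\<Sum>t\<in>UNIV. trans P s a t * Val P T t))"
    by (rule sum_step_prob_mult)
  moreover have "\<dots> \<le> (\<Sum>a\<in>UNIV. \<sigma> [s] a * Val P T s)"
    by (intro sum_mono strategy_weighted_expected_Val_le[OF assms(1,2,4)])
  moreover have "\<dots> = Val P T s"
    using strategy_sum_eq_1[OF assms(2), of "[s]"] by (simp add: sum_distrib_right[symmetric])
  ultimately show "(\<Sum>t\<in>UNIV. step_prob P \<sigma> s t * reach_prob_real P T (shift_strategy s \<sigma>) t) =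
      (\<Sum>t\<in>UNIV. step_prob P \<sigma> s t * Val P T t)"
    and "(\<Sum>a\<in>UNIV. \<sigma> [s] a * (\<Sum>t\<in>UNIV. trans P s a t * Val P T t)) =
      (\<Sum>a\<in>UNIV. \<sigma> [s] a * Val P T s)"
    by linarith+
qed

lemma optimal_strategy_action_in_Opt:
  assumes "is_mdp P" "\<sigma> \<in> strategies P" "reach_prob_real P T \<sigma> s = Val P T s" "s \<notin> T"
    and "0 < \<sigma> [s] a"
  shows "(s, a) \<in> Opt P T"
proof -
  have "\<sigma> [s] a * (\<Sum>t\<in>UNIV. trans P s a t * Val P T t) = \<sigma> [s] a * Val P T s"
    by (rule sum_eq_imp_eq_if_le[OF _ _ optimal_strategy_step_sums(2)[OF assms(1-4)]])
      (auto intro: strategy_weighted_expected_Val_le[OF assms(1,2,4)])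
  then show ?thesis
    using assms(5) strategy_legal[OF assms(2), of "[s]" a] by (simp add: Opt_def)
qed

lemma optimal_strategy_continues_optimally:
  assumes "is_mdp P" "\<sigma> \<in> strategies P" "reach_prob_real P T \<sigma> s = Val P T s" "s \<notin> T"
    and "0 < step_prob P \<sigma> s t"
  shows "reach_prob_real P T (shift_strategy s \<sigma>) t = Val P T t"
proof -
  have "step_prob P \<sigma> s t * reach_prob_real P T (shift_strategy s \<sigma>) t =
      step_prob P \<sigma> s t * Val P T t"
    by (rule sum_eq_imp_eq_if_le[OF _ _ optimal_strategy_step_sums(1)[OF assms(1-4)]])
      (auto intro: mult_left_mono reach_prob_real_le_Val step_prob_nonneg
        shift_strategy_in_strategies assms(1,2))
  then show ?thesis using assms(5) by simp
qed

lemma trans_pruned: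
  "0 < Val P T s \<Longrightarrow> trans (pruned P T) s a t =
    (if (s, a) \<in> Opt P T then trans P s a t * Val P T t / Val P T s else 0)"
  by (simp add: trans_def pruned_def)

lemma step_prob_pruned:
  assumes "is_mdp P" "\<sigma> \<in> strategies P" "reach_prob_real P T \<sigma> s = Val P T s" "s \<notin> T"
    and "0 < Val P T s"
  shows "step_prob (pruned P T) \<sigma> s t = step_prob P \<sigma> s t * Val P T t / Val P T s"
proof -
  have "\<sigma> [s] a * trans (pruned P T) s a t = \<sigma> [s] a * trans P s a t * Val P T t / Val P T s" for a
  proof (cases "0 < \<sigma> [s] a")
    case True
    then show ?thesis
      using optimal_strategy_action_in_Opt[OF assms(1-4)] assms(5) by (simp add: trans_pruned)
  next
    case False
    then show ?thesis using strategy_nonneg[OF assms(2), of "[s]" a] by simp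
  qed
  then show ?thesis by (simp add: step_prob_def sum_divide_distrib sum_distrib_right)
qed

lemma hit_prob_pruned:
  assumes "is_mdp P"
  shows "\<sigma> \<in> strategies P \<Longrightarrow> reach_prob_real P T \<sigma> s = Val P T s \<Longrightarrow> 0 < Val P T s \<Longrightarrow>
    hit_prob (pruned P T) T \<sigma> s r = hit_prob P T \<sigma> s r / Val P T s"
proof (induction r arbitrary: \<sigma> s)
  case 0
  then show ?case using Val_target[OF assms, of s T] by (simp add: hit_prob_0)
next
  case (Suc r)
  show ?case
  proof (cases "s \<in> T")
    case True
    then show ?thesis by (simp add: hit_prob_Suc_target)
  next
    case False
    note optimal = assms Suc.prems(1,2) False
    have shift: "shift_strategy s \<sigma> \<in> strategies P"
      using Suc.prems(1) by (rule shift_strategy_in_strategies)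
    have "step_prob (pruned P T) \<sigma> s t * hit_prob (pruned P T) T (shift_strategy s \<sigma>) t r =
        step_prob P \<sigma> s t * hit_prob P T (shift_strategy s \<sigma>) t r / Val P T s" for t
    proof (cases "step_prob P \<sigma> s t = 0")
      case True
      then show ?thesis by (simp add: step_prob_pruned[OF optimal Suc.prems(3)])
    next
      case False
      then have step_pos: "0 < step_prob P \<sigma> s t"
        using step_prob_nonneg[OF assms Suc.prems(1), of s t] by simp
      have reach_shift: "reach_prob_real P T (shift_strategy s \<sigma>) t = Val P T t"
        using optimal_strategy_continues_optimally[OF optimal step_pos] .
      show ?thesis
      proof (cases "Val P T t = 0")
        case True
        with reach_shift have "hit_prob P T (shift_strategy s \<sigma>) t r = 0"
          by (intro hit_prob_eq_0_if_reach_prob_real_eq_0 assms shift) simp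
        with True show ?thesis by (simp add: step_prob_pruned[OF optimal Suc.prems(3)])
      next
        case False
        then have "0 < Val P T t" using Val_nonneg[of P T t] by simp
        with Suc.IH[OF shift reach_shift] Suc.prems(3) show ?thesis
          by (simp add: step_prob_pruned[OF optimal Suc.prems(3)])
      qed
    qed
    then show ?thesis
      by (simp add: hit_prob_Suc[OF False] sum_divide_distrib)
  qed
qed

theorem lemma5:
  fixes P :: "('s::finite, 'a::finite) mdp" and T :: "'s set" and s0 :: 's
    and \<sigma> :: "'s list \<Rightarrow> 'a \<Rightarrow> real"
  assumes "is_mdp P"
    and "sinks P T"
    and "0 < Val P T s0"
    and "\<sigma> \<in> opt_strategies P T s0"
  shows "exp_len (pruned P T) T \<sigma> s0 = cond_exp_len P T \<sigma> s0"
proof -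
  have \<sigma>: "\<sigma> \<in> strategies P" and reach: "reach_prob P T \<sigma> s0 = ennreal (Val P T s0)"
    using assms(4) unfolding opt_strategies_def by auto
  then have "ennreal (reach_prob_real P T \<sigma> s0) = ennreal (Val P T s0)"
    by (simp add: reach_prob_eq_ennreal[OF assms(1)])
  then have "reach_prob_real P T \<sigma> s0 = Val P T s0"
    using ennreal_inj[OF reach_prob_real_nonneg[OF assms(1) \<sigma>] Val_nonneg] by blast
  then have hit: "ennreal (hit_prob (pruned P T) T \<sigma> s0 r) =
      ennreal (hit_prob P T \<sigma> s0 r) / ennreal (Val P T s0)" for r
    using hit_prob_pruned[OF assms(1) \<sigma> _ assms(3)] hit_prob_nonneg[OF assms(1) \<sigma>] assms(3)
    by (simp add: divide_ennreal)
  have "reach_prob (pruned P T) T \<sigma> s0 = reach_prob P T \<sigma> s0 / ennreal (Val P T s0)"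
    unfolding reach_prob_def hit by (rule ennreal_suminf_divide)
  also have "\<dots> = 1"
    using reach assms(3) by (simp add: divide_ennreal)
  finally have "exp_len (pruned P T) T \<sigma> s0 =
      (\<Sum>r. of_nat r * ennreal (hit_prob P T \<sigma> s0 r) / ennreal (Val P T s0))"
    unfolding exp_len_def hit ennreal_times_divide by simp
  also have "\<dots> = cond_exp_len P T \<sigma> s0"
    unfolding cond_exp_len_def reach by (rule ennreal_suminf_divide)
  finally show ?thesis .
qed

end
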